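(* Let $\mathcal{N}$ be one of $\mathcal{M}_\times$, $\mathcal{M}_\Sigma$, $\mathcal{M}$. If $\mathcal{N}\perp\Sigma$ and $\mathcal{N}\perp\mathsf{L}E$, then $\mathcal{N}\perp E$.
   Context: $\mathcal{E}$ is a locally cartesian closed category with a dominance: a class of monos (the $\Sigma$-monos) closed under pullback, identities and composition, classified by $\top:1\to\Sigma$. $\mathsf{L}E=\sum_{\phi:\Sigma}E^\phi$ is the associated partial map classifier. For a mono $m:I\to J$, $m\perp E$ means every map $I\to E$ extends uniquely along $m$; $\mathcal{N}\perp E$ means $m\perp E$ for all $m\in\mathcal{N}$. Given a class $\mathcal{M}$ of monos, $\mathcal{M}_\times$ is the smallest class of monos containing $\mathcal{M}$ and stable under products (with arbitrary objects), and $\mathcal{M}_\Sigma$ is the smallest class of monos containing $\mathcal{M}_\times$ and stable under pullback along $\Sigma$-monos. *)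

theory Defs
  imports Main
begin

record ('o, 'a) cat =
  Ob   :: "'o set"
  Ar   :: "'a set"
  dom  :: "'a \<Rightarrow> 'o"
  cod  :: "'a \<Rightarrow> 'o"
  comp :: "'a \<Rightarrow> 'a \<Rightarrow> 'a"   (* comp C g f = g o f *)
  idt  :: "'o \<Rightarrow> 'a"

definition hom :: "('o, 'a) cat \<Rightarrow> 'o \<Rightarrow> 'o \<Rightarrow> 'a set" where
  "hom C X Y = {f \<in> Ar C. dom C f = X \<and> cod C f = Y}"

definition category :: "('o, 'a) cat \<Rightarrow> bool" where
  "category C \<longleftrightarrow>
     (\<forall>f \<in> Ar C. dom C f \<in> Ob C \<and> cod C f \<in> Ob C) \<and>
     (\<forall>X \<in> Ob C. idt C X \<in> hom C X X) \<and>
     (\<forall>f g X Y Z. f \<in> hom C X Y \<longrightarrow> g \<in> hom C Y Z \<longrightarrow> comp C g f \<in> hom C X Z) \<and>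
     (\<forall>f X Y. f \<in> hom C X Y \<longrightarrow> comp C f (idt C X) = f \<and> comp C (idt C Y) f = f) \<and>
     (\<forall>f g h W X Y Z. f \<in> hom C W X \<longrightarrow> g \<in> hom C X Y \<longrightarrow> h \<in> hom C Y Z \<longrightarrow>
        comp C h (comp C g f) = comp C (comp C h g) f)"

definition mono :: "('o, 'a) cat \<Rightarrow> 'a \<Rightarrow> bool" where
  "mono C m \<longleftrightarrow> m \<in> Ar C \<and>
     (\<forall>g h X. g \<in> hom C X (dom C m) \<longrightarrow> h \<in> hom C X (dom C m) \<longrightarrow>
        comp C m g = comp C m h \<longrightarrow> g = h)"

definition terminal :: "('o, 'a) cat \<Rightarrow> 'o \<Rightarrow> bool" where
  "terminal C T \<longleftrightarrow> T \<in> Ob C \<and> (\<forall>X \<in> Ob C. \<exists>!u. u \<in> hom C X T)"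

definition is_pullback :: "('o, 'a) cat \<Rightarrow> 'a \<Rightarrow> 'a \<Rightarrow> 'a \<Rightarrow> 'a \<Rightarrow> bool" where
  "is_pullback C f g p q \<longleftrightarrow>
     f \<in> Ar C \<and> g \<in> Ar C \<and> p \<in> Ar C \<and> q \<in> Ar C \<and>
     cod C f = cod C g \<and> dom C p = dom C q \<and>
     cod C p = dom C f \<and> cod C q = dom C g \<and>
     comp C f p = comp C g q \<and>
     (\<forall>P' p' q'. p' \<in> hom C P' (dom C f) \<longrightarrow> q' \<in> hom C P' (dom C g) \<longrightarrow>
        comp C f p' = comp C g q' \<longrightarrow>
        (\<exists>!u. u \<in> hom C P' (dom C p) \<and> comp C p u = p' \<and> comp C q u = q'))"

definition is_product :: "('o, 'a) cat \<Rightarrow> 'o \<Rightarrow> 'o \<Rightarrow> 'o \<Rightarrow> 'a \<Rightarrow> 'a \<Rightarrow> bool" where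
  "is_product C X Y P p1 p2 \<longleftrightarrow>
     p1 \<in> hom C P X \<and> p2 \<in> hom C P Y \<and>
     (\<forall>Z a b. a \<in> hom C Z X \<longrightarrow> b \<in> hom C Z Y \<longrightarrow>
        (\<exists>!u. u \<in> hom C Z P \<and> comp C p1 u = a \<and> comp C p2 u = b))"

text \<open>Locally cartesian closed: finite limits (terminal object and pullbacks) and,
  for every f : A -> B, pullback along f has a right adjoint (dependent product),
  expressed by its universal property.\<close>
definition lcc :: "('o, 'a) cat \<Rightarrow> bool" where
  "lcc C \<longleftrightarrow> category C \<and>
     (\<exists>T. terminal C T) \<and>
     (\<forall>f g. f \<in> Ar C \<longrightarrow> g \<in> Ar C \<longrightarrow> cod C f = cod C g \<longrightarrow>
        (\<exists>p q. is_pullback C f g p q)) \<and>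
     (\<forall>f A B p X. f \<in> hom C A B \<longrightarrow> p \<in> hom C X A \<longrightarrow>
        (\<exists>Y q \<pi>1 \<pi>2 \<epsilon>. q \<in> hom C Y B \<and> is_pullback C f q \<pi>1 \<pi>2 \<and>
           \<epsilon> \<in> hom C (dom C \<pi>1) X \<and> comp C p \<epsilon> = \<pi>1 \<and>
           (\<forall>Z r \<rho>1 \<rho>2 h. r \<in> hom C Z B \<longrightarrow> is_pullback C f r \<rho>1 \<rho>2 \<longrightarrow>
              h \<in> hom C (dom C \<rho>1) X \<longrightarrow> comp C p h = \<rho>1 \<longrightarrow>
              (\<exists>!k. k \<in> hom C Z Y \<and> comp C q k = r \<and>
                 (\<forall>u. u \<in> hom C (dom C \<rho>1) (dom C \<pi>1) \<longrightarrow> comp C \<pi>1 u = \<rho>1 \<longrightarrow>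
                      comp C \<pi>2 u = comp C k \<rho>2 \<longrightarrow> comp C \<epsilon> u = h)))))"

text \<open>D is the class of Sigma-monos; tp : 1 -> Sig classifies it.\<close>
definition dominance :: "('o, 'a) cat \<Rightarrow> 'a set \<Rightarrow> 'o \<Rightarrow> 'a \<Rightarrow> bool" where
  "dominance C D Sig tp \<longleftrightarrow>
     terminal C (dom C tp) \<and> tp \<in> hom C (dom C tp) Sig \<and>
     (\<forall>m \<in> D. mono C m) \<and>
     (\<forall>X \<in> Ob C. idt C X \<in> D) \<and>
     (\<forall>m n. m \<in> D \<longrightarrow> n \<in> D \<longrightarrow> cod C m = dom C n \<longrightarrow> comp C n m \<in> D) \<and>
     (\<forall>m f p q. m \<in> D \<longrightarrow> is_pullback C f m p q \<longrightarrow> p \<in> D) \<and>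
     (\<forall>m. m \<in> D \<longleftrightarrow> (mono C m \<and>
          (\<exists>\<chi> t. \<chi> \<in> hom C (cod C m) Sig \<and> is_pullback C \<chi> tp m t))) \<and>
     (\<forall>m \<in> D. \<forall>\<chi> \<chi>' t t'. is_pullback C \<chi> tp m t \<longrightarrow> is_pullback C \<chi>' tp m t' \<longrightarrow>
          \<chi> = \<chi>')"

definition partial_map_classifier ::
  "('o, 'a) cat \<Rightarrow> 'a set \<Rightarrow> 'o \<Rightarrow> 'o \<Rightarrow> 'a \<Rightarrow> bool" where
  "partial_map_classifier C D E LE eta \<longleftrightarrow>
     E \<in> Ob C \<and> eta \<in> hom C E LE \<and> eta \<in> D \<and>
     (\<forall>m f. m \<in> D \<longrightarrow> f \<in> hom C (dom C m) E \<longrightarrow>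
        (\<exists>!g. g \<in> hom C (cod C m) LE \<and> is_pullback C g eta m f))"

definition orth :: "('o, 'a) cat \<Rightarrow> 'a \<Rightarrow> 'o \<Rightarrow> bool" where
  "orth C m E \<longleftrightarrow> (\<forall>f. f \<in> hom C (dom C m) E \<longrightarrow>
      (\<exists>!g. g \<in> hom C (cod C m) E \<and> comp C g m = f))"

definition orth_class :: "('o, 'a) cat \<Rightarrow> 'a set \<Rightarrow> 'o \<Rightarrow> bool" where
  "orth_class C N E \<longleftrightarrow> (\<forall>m \<in> N. orth C m E)"

text \<open>M_x: smallest class containing M and closed under products m x X with
  arbitrary objects X (for any choice of the products I x X and J x X).\<close>
inductive_set prod_closure :: "('o, 'a) cat \<Rightarrow> 'a set \<Rightarrow> 'a set"
  for C :: "('o, 'a) cat" and M :: "'a set" where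
  base: "m \<in> M \<Longrightarrow> m \<in> prod_closure C M"
| prod: "\<lbrakk> m \<in> prod_closure C M; X \<in> Ob C;
           is_product C (dom C m) X P p1 p2; is_product C (cod C m) X Q q1 q2;
           u \<in> hom C P Q; comp C q1 u = comp C m p1; comp C q2 u = p2 \<rbrakk>
         \<Longrightarrow> u \<in> prod_closure C M"

text \<open>M_Sigma: smallest class containing M_x and closed under pullback along Sigma-monos.\<close>
inductive_set sigma_closure :: "('o, 'a) cat \<Rightarrow> 'a set \<Rightarrow> 'a set \<Rightarrow> 'a set"
  for C :: "('o, 'a) cat" and D :: "'a set" and M :: "'a set" where
  base: "m \<in> prod_closure C M \<Longrightarrow> m \<in> sigma_closure C D M"
| pb: "\<lbrakk> m \<in> sigma_closure C D M; d \<in> D; is_pullback C d m p q \<rbrakk>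
         \<Longrightarrow> p \<in> sigma_closure C D M"

end

theory Submission
  imports Defs
begin

text \<open>The partial map classifier exhibits \<open>E\<close> as the pullback of the classifying map
  \<open>\<chi> : LE \<rightarrow> \<Sigma>\<close> of \<open>\<eta>\<close> along \<open>\<top> : 1 \<rightarrow> \<Sigma>\<close>. Every arrow is orthogonal to the terminal
  object, and the objects orthogonal to a fixed arrow are closed under pullbacks, so
  \<open>m \<perp> \<Sigma>\<close> and \<open>m \<perp> LE\<close> give \<open>m \<perp> E\<close>.\<close>

lemma cat_comp_in_hom:
  "category C \<Longrightarrow> f \<in> hom C X Y \<Longrightarrow> g \<in> hom C Y Z \<Longrightarrow> comp C g f \<in> hom C X Z"
  unfolding category_def by blast

lemma cat_comp_assoc:
  "category C \<Longrightarrow> f \<in> hom C W X \<Longrightarrow> g \<in> hom C X Y \<Longrightarrow> h \<in> hom C Y Z \<Longrightarrow>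
    comp C h (comp C g f) = comp C (comp C h g) f"
  unfolding category_def by blast

lemma arrow_in_hom: "m \<in> Ar C \<Longrightarrow> m \<in> hom C (dom C m) (cod C m)"
  by (simp add: hom_def)

lemma orth_unique:
  assumes "category C" "m \<in> Ar C" "orth C m X"
    and "a \<in> hom C (cod C m) X" "b \<in> hom C (cod C m) X" "comp C a m = comp C b m"
  shows "a = b"
  using assms cat_comp_in_hom[OF \<open>category C\<close> arrow_in_hom[OF \<open>m \<in> Ar C\<close>]]
  unfolding orth_def by metis

lemma orth_terminal:
  assumes C: "category C" and T: "terminal C T" and m: "m \<in> Ar C"
  shows "orth C m T"
  unfolding orth_def
proof (intro allI impI)
  fix f assume f: "f \<in> hom C (dom C m) T"
  have "cod C m \<in> Ob C" using C m unfolding category_def by blast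
  then obtain g where g: "g \<in> hom C (cod C m) T"
    and g_unique: "\<And>h. h \<in> hom C (cod C m) T \<Longrightarrow> h = g"
    using T unfolding terminal_def by blast
  have "dom C m \<in> Ob C" using C m unfolding category_def by blast
  with T f have "comp C g m = f"
    using cat_comp_in_hom[OF C arrow_in_hom[OF m] g] unfolding terminal_def by blast
  with g g_unique show "\<exists>!g. g \<in> hom C (cod C m) T \<and> comp C g m = f" by blast
qed

lemma pullback_cone_unique:
  assumes C: "category C" and pb: "is_pullback C f g p q"
    and h: "h \<in> hom C X (dom C p)" and h': "h' \<in> hom C X (dom C p)"
    and ph: "comp C p h = comp C p h'" and qh: "comp C q h = comp C q h'"
  shows "h = h'"
proof -
  have p: "p \<in> hom C (dom C p) (dom C f)" and q: "q \<in> hom C (dom C p) (dom C g)"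
    using pb unfolding is_pullback_def hom_def by auto
  have sq: "comp C f p = comp C g q" using pb unfolding is_pullback_def by blast
  have f: "f \<in> hom C (dom C f) (cod C f)" and g: "g \<in> hom C (dom C g) (cod C f)"
    using pb unfolding is_pullback_def hom_def by auto
  have "comp C f (comp C p h') = comp C g (comp C q h')"
    using cat_comp_assoc[OF C h' p f] cat_comp_assoc[OF C h' q g] sq by simp
  then have "\<exists>!u. u \<in> hom C X (dom C p) \<and> comp C p u = comp C p h' \<and> comp C q u = comp C q h'"
    using pb cat_comp_in_hom[OF C h' p] cat_comp_in_hom[OF C h' q]
    unfolding is_pullback_def by blast
  then show ?thesis using h h' ph qh by blast
qed

lemma orth_pullback:
  assumes C: "category C" and pb: "is_pullback C f g p q" and m: "m \<in> Ar C"
    and orth_A: "orth C m (dom C f)" and orth_B: "orth C m (dom C g)"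
    and orth_Z: "orth C m (cod C f)"
  shows "orth C m (dom C p)"
proof -
  let ?I = "dom C m" and ?J = "cod C m" and ?P = "dom C p"
  have mh: "m \<in> hom C ?I ?J" using m by (rule arrow_in_hom)
  have p: "p \<in> hom C ?P (dom C f)" and q: "q \<in> hom C ?P (dom C g)"
    and f: "f \<in> hom C (dom C f) (cod C f)" and g: "g \<in> hom C (dom C g) (cod C f)"
    and sq: "comp C f p = comp C g q"
    using pb unfolding is_pullback_def hom_def by auto
  show ?thesis
    unfolding orth_def
  proof (intro allI impI)
    fix x assume x: "x \<in> hom C ?I ?P"
    obtain a where a: "a \<in> hom C ?J (dom C f)" and am: "comp C a m = comp C p x"
      using orth_A cat_comp_in_hom[OF C x p] unfolding orth_def by blast
    obtain b where b: "b \<in> hom C ?J (dom C g)" and bm: "comp C b m = comp C q x"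
      using orth_B cat_comp_in_hom[OF C x q] unfolding orth_def by blast
    have "comp C (comp C f a) m = comp C (comp C g b) m"
      using cat_comp_assoc[OF C mh a f] cat_comp_assoc[OF C mh b g] am bm
        cat_comp_assoc[OF C x p f] cat_comp_assoc[OF C x q g] sq by simp
    then have "comp C f a = comp C g b"
      using orth_unique[OF C m orth_Z] cat_comp_in_hom[OF C a f] cat_comp_in_hom[OF C b g]
      by blast
    then obtain y where y: "y \<in> hom C ?J ?P"
      and py: "comp C p y = a" and qy: "comp C q y = b"
      using pb a b unfolding is_pullback_def by blast
    have ym: "comp C y m = x"
      using pullback_cone_unique[OF C pb cat_comp_in_hom[OF C mh y] x]
        cat_comp_assoc[OF C mh y p] cat_comp_assoc[OF C mh y q] py qy am bm by simp
    have "z = y" if z: "z \<in> hom C ?J ?P" and zm: "comp C z m = x" for z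
    proof (rule pullback_cone_unique[OF C pb z y])
      show "comp C p z = comp C p y"
        using orth_unique[OF C m orth_A cat_comp_in_hom[OF C z p] cat_comp_in_hom[OF C y p]]
          cat_comp_assoc[OF C mh z p] cat_comp_assoc[OF C mh y p] zm ym by simp
      show "comp C q z = comp C q y"
        using orth_unique[OF C m orth_B cat_comp_in_hom[OF C z q] cat_comp_in_hom[OF C y q]]
          cat_comp_assoc[OF C mh z q] cat_comp_assoc[OF C mh y q] zm ym by simp
    qed
    with y ym show "\<exists>!y. y \<in> hom C ?J ?P \<and> comp C y m = x" by blast
  qed
qed

lemma partial_map_classifier_pullback:
  assumes "dominance C D Sig tp" "partial_map_classifier C D E LE eta"
  obtains \<chi> t where "\<chi> \<in> hom C LE Sig" "is_pullback C \<chi> tp eta t"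
proof -
  have "eta \<in> D" "eta \<in> hom C E LE"
    using assms(2) unfolding partial_map_classifier_def by auto
  then show ?thesis
    using assms(1) that unfolding dominance_def hom_def by auto
qed

lemma orth_classified_object:
  assumes C: "category C" and dm: "dominance C D Sig tp"
    and pmc: "partial_map_classifier C D E LE eta" and m: "m \<in> Ar C"
    and "orth C m Sig" "orth C m LE"
  shows "orth C m E"
proof -
  obtain \<chi> t where \<chi>: "\<chi> \<in> hom C LE Sig" and pb: "is_pullback C \<chi> tp eta t"
    using dm pmc by (rule partial_map_classifier_pullback)
  have "terminal C (dom C tp)" using dm unfolding dominance_def by blast
  then have "orth C m (dom C tp)" by (rule orth_terminal[OF C _ m])
  then have "orth C m (dom C eta)"
    using orth_pullback[OF C pb m] assms(5,6) \<chi> unfolding hom_def by simp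
  then show ?thesis using pmc unfolding partial_map_classifier_def hom_def by simp
qed

lemma prod_closure_arrows:
  assumes "\<forall>m \<in> M. mono C m"
  shows "m \<in> prod_closure C M \<Longrightarrow> m \<in> Ar C"
  by (induction rule: prod_closure.induct) (use assms in \<open>auto simp: mono_def hom_def\<close>)

lemma sigma_closure_arrows:
  assumes "\<forall>m \<in> M. mono C m"
  shows "m \<in> sigma_closure C D M \<Longrightarrow> m \<in> Ar C"
  by (induction rule: sigma_closure.induct)
    (use assms prod_closure_arrows in \<open>auto simp: is_pullback_def\<close>)

theorem mainTheorem12:
  fixes C :: "('o, 'a) cat" and D M N :: "'a set" and Sig E LE :: 'o and tp eta :: 'a
  assumes "lcc C"
    and "dominance C D Sig tp"
    and "\<forall>m \<in> M. mono C m"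
    and "E \<in> Ob C"
    and "partial_map_classifier C D E LE eta"
    and "N \<in> {prod_closure C M, sigma_closure C D M, M}"
    and "orth_class C N Sig"
    and "orth_class C N LE"
  shows "orth_class C N E"
proof -
  have C: "category C" using assms(1) by (simp add: lcc_def)
  have "N \<subseteq> Ar C"
    using assms(3,6) prod_closure_arrows sigma_closure_arrows by (auto simp: mono_def)
  then show ?thesis
    using orth_classified_object[OF C assms(2,5)] assms(7,8)
    unfolding orth_class_def by blast
qed

end
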